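(* Let $T$ be a finite set, let $X=(X_t)_{t\in T}$ be a random process with $\max_{t\in T}\mathbf{E}|X_t|<\infty$, let $K\in\mathbb{N}$ and $\mu\in\mathcal{P}_K$. Let $X^{(1)},X^{(2)},\ldots$ be i.i.d. copies of $X$ and for $M\in\mathbb{N}$, $\mathbf{t}=(\mathbf{t}_1,\dots,\mathbf{t}_M)\in T^M$ define $X_{\mathbf{t}}=\frac1M\sum_{i=1}^M X^{(i)}_{\mathbf{t}_i}$. Then $$\mathscr{F}(X,\mu)=\lim_{N\to\infty}\mathbf{E}\Big[\sup_{\mathbf{t}\in\mathcal{T}_N(\mu)}X_{\mathbf{t}}\Big].$$
   Context: $\mathcal{P}_K=\{\frac1K\sum_{i=1}^K\delta_{t_i}: t_1,\dots,t_K\in T\}$ is the set of probability measures on $T$ whose atom probabilities are integer multiples of $1/K$. For $N\in\mathbb{N}$ and $\mu\in\mathcal{P}_K$, $\mathcal{T}_N(\mu)=\{\mathbf{t}\in T^{NK}: \frac{1}{NK}\sum_{i=1}^{NK}\delta_{\mathbf{t}_i}=\mu\}$, the set of sequences of length $NK$ in which each $t\in T$ appears exactly $NK\mu(\{t\})$ times. Fernique's functional: for a probability measure $P_X$ on $\mathbb{R}^T$ with $\int\|x\|\,P_X(dx)<\infty$ and a probability measure $\mu$ on $T$, $\mathscr{F}(P_X,\mu)=\sup\mathbf{E}[X_Z]$ over all couplings $(X,Z)$ with $X\sim P_X$, $Z\sim\mu$; for a process $X$, $\mathscr{F}(X,\mu)=\mathscr{F}(P_X,\mu)$ with $P_X$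 the law of $X$. *)

theory Defs
  imports "HOL-Probability.Probability"
begin

text \<open>The finite index set T is a finite type 'n; a process indexed by T is a
random vector with values in real ^ 'n (component t is x $ t).
Probability measures on T are pmfs on 'n.\<close>

definition in_PK :: "nat \<Rightarrow> 'n::finite pmf \<Rightarrow> bool" where
  "in_PK K mu \<longleftrightarrow> (\<forall>t. \<exists>k::nat. pmf mu t = real k / real K)"

definition typeclass_seqs :: "nat \<Rightarrow> nat \<Rightarrow> 'n::finite pmf \<Rightarrow> 'n list set" where
  "typeclass_seqs K N mu =
     {ts. length ts = N * K \<and> (\<forall>t. real (count_list ts t) = real (N * K) * pmf mu t)}"

definition coupling :: "(real ^ 'n::finite) measure \<Rightarrow> 'n pmf
    \<Rightarrow> ((real ^ 'n) \<times> 'n) measure \<Rightarrow> bool" where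
  "coupling P mu Q \<longleftrightarrow>
     prob_space Q \<and>
     sets Q = sets (borel \<Otimes>\<^sub>M count_space UNIV) \<and>
     distr Q borel fst = P \<and>
     distr Q (count_space UNIV) snd = measure_pmf mu"

definition fernique :: "(real ^ 'n::finite) measure \<Rightarrow> 'n pmf \<Rightarrow> real" where
  "fernique P mu = (SUP Q \<in> {Q. coupling P mu Q}. \<integral>p. (fst p) $ (snd p) \<partial>Q)"

end

theory Submission
  imports Defs
begin

text \<open>
  Upper bound, for every N: choose a measurable maximiser \<tau> of t \<mapsto> X_t over T_N(\<mu>) and an index I
  uniform on {1..NK}, independent of the sample. Every sequence in T_N(\<mu>) has empirical distribution \<mu>,
  so (X^(I), \<tau>_I) is a coupling of the law of X with \<mu>, and its value E X^(I)_{\<tau>_I} is exactly the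
  expected maximum.

  Lower bound: given a coupling (X, Z), take NK i.i.d. copies (X^(i), Z^(i)). Changing at most
  \<Sum>_t |#{i. Z^(i) = t} - NK \<mu>(t)| entries of (Z^(i)) yields an element of T_N(\<mu>), and each change
  costs at most 2 |X^(i)| \<le> 2 L + 2 (|X^(i)| - L)^+. The count deviations are O(sqrt (NK)) in
  expectation by a second moment bound, and the truncated tail is small for large L uniformly in N, so
  the expected maximum eventually exceeds E X_Z - \<epsilon>.
\<close>

lemma exists_list_with_counts_close:
  fixes z :: "'a::finite list" and c :: "'a \<Rightarrow> nat"
  assumes "(\<Sum>t\<in>UNIV. c t) = length z"
  obtains s where "length s = length z" "\<And>t. count_list s t = c t"
    "card {i. i < length z \<and> s ! i \<noteq> z ! i} \<le> (\<Sum>t\<in>UNIV. count_list z t - c t)"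
proof -
  have "\<exists>s. length s = length z \<and> (\<forall>t. count_list s t = c t) \<and>
      card {i. i < length z \<and> s ! i \<noteq> z ! i} \<le> (\<Sum>t\<in>UNIV. count_list z t - c t)"
    using assms
  proof (induction "\<Sum>t\<in>UNIV. count_list z t - c t" arbitrary: z rule: less_induct)
    case less
    have same_total: "(\<Sum>t\<in>UNIV. count_list z t) = (\<Sum>t\<in>UNIV. c t)"
      using less.prems by (simp add: sum_count_set)
    show ?case
    proof (cases "\<exists>t. c t < count_list z t")
      case False
      then have "count_list z t = c t" for t
        using sum_mono_inv[OF same_total] by (simp add: not_less)
      then show ?thesis by (intro exI[of _ z]) auto
    next
      case True
      then obtain t1 where t1: "c t1 < count_list z t1" by blast
      have "\<exists>t2. count_list z t2 < c t2"
      proof (rule ccontr)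
        assume "\<nexists>t2. count_list z t2 < c t2"
        then have "c t = count_list z t" for t
          using sum_mono_inv[OF same_total[symmetric]] by (simp add: not_less)
        with t1 show False by simp
      qed
      then obtain t2 where t2: "count_list z t2 < c t2" by blast
      have "t1 \<noteq> t2" using t1 t2 by auto
      have "t1 \<in> set z" using t1 by (metis count_notin not_less_zero)
      then obtain i where i: "i < length z" "z ! i = t1" by (auto simp: in_set_conv_nth)
      define z' where "z' = z[i := t2]"
      have count_z': "count_list z' t = count_list z t - (if t = t1 then 1 else 0) + (if t = t2 then 1 else 0)" for t
        using i t1 by (simp add: z'_def flip: count_mset add: mset_update)
      have excess_z': "count_list z' t - c t = count_list z t - c t - (if t = t1 then 1 else 0)" for t
        using count_z'[of t] t1 t2 \<open>t1 \<noteq> t2\<close> by auto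
      have excess_decreases: "(\<Sum>t\<in>UNIV. count_list z' t - c t) + 1 = (\<Sum>t\<in>UNIV. count_list z t - c t)"
        using t1 by (simp add: excess_z' sum.remove[of UNIV t1] del: One_nat_def)
      moreover have "length z' = length z" by (simp add: z'_def)
      ultimately obtain s where s: "length s = length z" "\<forall>t. count_list s t = c t"
          "card {j. j < length z \<and> s ! j \<noteq> z' ! j} \<le> (\<Sum>t\<in>UNIV. count_list z' t - c t)"
        using less.hyps[of z'] less.prems by auto
      have "{j. j < length z \<and> s ! j \<noteq> z ! j} \<subseteq> insert i {j. j < length z \<and> s ! j \<noteq> z' ! j}"
        by (auto simp: z'_def)
      then have "card {j. j < length z \<and> s ! j \<noteq> z ! j} \<le> card (insert i {j. j < length z \<and> s ! j \<noteq> z' ! j})"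
        by (rule card_mono[rotated]) simp
      also have "\<dots> \<le> card {j. j < length z \<and> s ! j \<noteq> z' ! j} + 1"
        by (simp add: card_insert_if)
      finally show ?thesis using s excess_decreases by (intro exI[of _ s]) auto
    qed
  qed
  then show ?thesis using that by blast
qed

lemma lists_with_counts_nonempty:
  fixes c :: "'a::finite \<Rightarrow> nat"
  assumes "(\<Sum>t\<in>UNIV. c t) = n"
  shows "{s. length s = n \<and> (\<forall>t. count_list s t = c t)} \<noteq> {}"
proof -
  have "(\<Sum>t\<in>UNIV. c t) = length (replicate n undefined)"
    using assms by simp
  then obtain s where "length s = n" "\<And>t. count_list s t = c t"
    by (rule exists_list_with_counts_close) simp
  then show ?thesis by blast
qed

lemma finite_lists_of_length: "finite {s :: 'a::finite list. length s = n \<and> P s}"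
  by (rule finite_subset[OF _ finite_lists_length_eq[of UNIV n]]) auto

definition sample_mean :: "(nat \<Rightarrow> real ^ 'n) \<Rightarrow> 'n list \<Rightarrow> real" where
  "sample_mean x ts = (\<Sum>i<length ts. x i $ (ts ! i)) / real (length ts)"

lemma sample_mean_cong:
  assumes "length ts \<le> n" and "\<And>i. i < n \<Longrightarrow> x i = y i"
  shows "sample_mean x ts = sample_mean y ts"
  using assms unfolding sample_mean_def by (intro arg_cong2[where f="(/)"] sum.cong) auto

lemma abs_sample_mean_le:
  fixes x :: "nat \<Rightarrow> real ^ 'n::finite"
  shows "\<bar>sample_mean x ts\<bar> \<le> (\<Sum>i<length ts. norm (x i)) / length ts"
proof -
  have "\<bar>\<Sum>i<length ts. x i $ (ts ! i)\<bar> \<le> (\<Sum>i<length ts. norm (x i))"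
    by (rule order_trans[OF sum_abs sum_mono]) (rule component_le_norm_cart)
  then show ?thesis by (simp add: sample_mean_def divide_right_mono)
qed

(* Changing index i costs at most 2 norm (x i), which is split as 2L plus the excess over L. *)
lemma sample_mean_change_index_bound:
  fixes x :: "nat \<Rightarrow> real ^ 'n::finite"
  assumes "length s = length z" and "0 \<le> (L::real)"
  shows "sample_mean x z - sample_mean x s \<le>
    2 * (L * card {i. i < length z \<and> s ! i \<noteq> z ! i} + (\<Sum>i<length z. max 0 (norm (x i) - L))) / real (length z)"
proof -
  define D where "D = {i. i < length z \<and> s ! i \<noteq> z ! i}"
  have term_bound: "x i $ (z ! i) - x i $ (s ! i) \<le> 2 * L * of_bool (i \<in> D) + 2 * max 0 (norm (x i) - L)"
    if "i < length z" for i
  proof (cases "i \<in> D")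
    case True
    have "x i $ (z ! i) - x i $ (s ! i) \<le> 2 * norm (x i)"
      using component_le_norm_cart[of "x i" "z ! i"] component_le_norm_cart[of "x i" "s ! i"] by linarith
    then show ?thesis using True by (simp add: max_def)
  next
    case False
    then show ?thesis using that assms(2) by (simp add: D_def)
  qed
  have "(\<Sum>i<length z. x i $ (z ! i)) - (\<Sum>i<length z. x i $ (s ! i))
      \<le> (\<Sum>i<length z. 2 * L * of_bool (i \<in> D) + 2 * max 0 (norm (x i) - L))"
    unfolding sum_subtractf[symmetric] by (rule sum_mono) (simp add: term_bound)
  also have "\<dots> = 2 * (L * card D + (\<Sum>i<length z. max 0 (norm (x i) - L)))"
    by (simp add: sum.distrib sum_distrib_left[symmetric] D_def Int_def conj_commute)
  finally show ?thesis
    using assms(1) by (simp add: sample_mean_def D_def divide_right_mono flip: diff_divide_distrib)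
qed

lemma Max_sample_mean_fixed_counts_ge:
  fixes x :: "nat \<Rightarrow> real ^ 'n::finite" and c :: "'n \<Rightarrow> nat"
  assumes "(\<Sum>t\<in>UNIV. c t) = length z" and "0 \<le> (L::real)"
  shows "sample_mean x z - 2 * (L * (\<Sum>t\<in>UNIV. count_list z t - c t)
          + (\<Sum>i<length z. max 0 (norm (x i) - L))) / real (length z)
    \<le> (MAX s \<in> {s. length s = length z \<and> (\<forall>t. count_list s t = c t)}. sample_mean x s)"
proof -
  obtain s where s: "length s = length z" "\<And>t. count_list s t = c t"
    and close: "card {i. i < length z \<and> s ! i \<noteq> z ! i} \<le> (\<Sum>t\<in>UNIV. count_list z t - c t)"
    using exists_list_with_counts_close[OF assms(1)] by blast
  have "sample_mean x z - 2 * (L * (\<Sum>t\<in>UNIV. count_list z t - c t)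
          + (\<Sum>i<length z. max 0 (norm (x i) - L))) / real (length z)
      \<le> sample_mean x z - 2 * (L * card {i. i < length z \<and> s ! i \<noteq> z ! i}
          + (\<Sum>i<length z. max 0 (norm (x i) - L))) / real (length z)"
    using close assms(2)
    by (intro diff_left_mono divide_right_mono mult_left_mono add_right_mono) (simp_all flip: of_nat_sum)
  also have "\<dots> \<le> sample_mean x s"
    using sample_mean_change_index_bound[OF s(1) assms(2), of x] by linarith
  also have "\<dots> \<le> (MAX s \<in> {s. length s = length z \<and> (\<forall>t. count_list s t = c t)}. sample_mean x s)"
    using s by (intro Max_ge finite_imageI finite_lists_of_length) auto
  finally show ?thesis .
qed

lemma real_count_list_map_upt:
  "real (count_list (map f [0..<n]) t) = (\<Sum>i<n. indicator {t} (f i))"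
proof -
  have "(\<Sum>i<n. indicator {t} (f i) :: real) = (\<Sum>i<n. indicator (f -` {t}) i)"
    by (intro sum.cong) (auto simp: indicator_def)
  also have "\<dots> = real (card ({..<n} \<inter> f -` {t}))"
    unfolding indicator_def sum.If_cases[OF finite_lessThan] by (simp add: Int_def)
  also have "{..<n} \<inter> f -` {t} = {i. i < length (map f [0..<n]) \<and> t = map f [0..<n] ! i}"
    by auto
  finally show ?thesis
    by (simp only: count_list_eq_length_filter length_filter_conv_card)
qed

lemma of_nat_diff_le_abs: "real (a - b) \<le> \<bar>real a - real b\<bar>"
  by (cases "b \<le> a") simp_all

lemma sum_counts_eq:
  fixes mu :: "'n::finite pmf"
  assumes "0 < n" and "\<And>t. pmf mu t = real (c t) / real n"
  shows "(\<Sum>t\<in>UNIV. c t) = n"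
proof -
  have "(\<Sum>t\<in>UNIV. real (c t) / real n) = 1"
    using sum_pmf_eq_1[of UNIV mu] by (simp add: assms(2))
  then have "real (\<Sum>t\<in>UNIV. c t) = real n"
    using assms(1) by (simp flip: sum_divide_distrib)
  then show ?thesis by (simp only: of_nat_eq_iff)
qed

lemma Max_sample_mean_ge_pairs:
  fixes \<omega> :: "nat \<Rightarrow> (real ^ 'n::finite) \<times> 'n"
  assumes "0 < n" and c: "\<And>t. pmf mu t = real (c t) / real n" and "0 \<le> L"
  shows "(\<Sum>i<n. fst (\<omega> i) $ snd (\<omega> i)) / n
      - 2 * (L * (\<Sum>t\<in>UNIV. \<bar>\<Sum>i<n. indicator {t} (snd (\<omega> i)) - pmf mu t\<bar>)
        + (\<Sum>i<n. max 0 (norm (fst (\<omega> i)) - L))) / n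
    \<le> (MAX s\<in>{s. length s = n \<and> (\<forall>t. count_list s t = c t)}. sample_mean (\<lambda>i. fst (\<omega> i)) s)"
proof -
  define z where "z = map (\<lambda>i. snd (\<omega> i)) [0..<n]"
  have z_length: "length z = n" by (simp add: z_def)
  have excess_le: "real (count_list z t - c t) \<le> \<bar>\<Sum>i<n. indicator {t} (snd (\<omega> i)) - pmf mu t\<bar>" for t
  proof -
    have "(\<Sum>i<n. indicator {t} (snd (\<omega> i)) - pmf mu t) = real (count_list z t) - real (c t)"
      using assms(1) by (simp add: sum_subtractf z_def real_count_list_map_upt c)
    then show ?thesis using of_nat_diff_le_abs by simp
  qed
  have "sample_mean (\<lambda>i. fst (\<omega> i)) z = (\<Sum>i<n. fst (\<omega> i) $ snd (\<omega> i)) / n"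
    by (simp add: sample_mean_def z_def)
  moreover have "L * real (\<Sum>t\<in>UNIV. count_list z t - c t)
      \<le> L * (\<Sum>t\<in>UNIV. \<bar>\<Sum>i<n. indicator {t} (snd (\<omega> i)) - pmf mu t\<bar>)"
    unfolding of_nat_sum using assms(3) excess_le by (intro mult_left_mono sum_mono) auto
  moreover have "(\<Sum>t\<in>UNIV. c t) = length z"
    using sum_counts_eq[OF assms(1) c] z_length by simp
  note Max_sample_mean_fixed_counts_ge[OF this assms(3), of "\<lambda>i. fst (\<omega> i)"]
  ultimately show ?thesis
    unfolding z_length using assms(1) by (smt (verit) divide_right_mono of_nat_0_le_iff)
qed

lemma in_PK_obtain_counts:
  fixes mu :: "'n::finite pmf"
  assumes "0 < K" and "in_PK K mu"
  obtains k :: "'n \<Rightarrow> nat" where "\<And>t. pmf mu t = real (k t) / real K" and "(\<Sum>t\<in>UNIV. k t) = K"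
proof -
  obtain k :: "'n \<Rightarrow> nat" where k: "\<And>t. pmf mu t = real (k t) / real K"
    using assms(2) unfolding in_PK_def by metis
  show ?thesis
    by (rule that[OF k sum_counts_eq[OF assms(1) k]])
qed

lemma typeclass_seqs_eq_counts:
  assumes "0 < K" and "\<And>t. pmf mu t = real (k t) / real K"
  shows "typeclass_seqs K N mu = {s. length s = N * K \<and> (\<forall>t. count_list s t = N * k t)}"
proof -
  have "real (N * K) * pmf mu t = real (N * k t)" for t
    using assms by simp
  then show ?thesis unfolding typeclass_seqs_def by (simp only: of_nat_eq_iff)
qed

lemma finite_typeclass_seqs: "finite (typeclass_seqs K N mu)"
  unfolding typeclass_seqs_def by (rule finite_lists_of_length)

lemma typeclass_seqs_nonempty:
  fixes mu :: "'n::finite pmf"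
  assumes "0 < K" and "in_PK K mu"
  shows "typeclass_seqs K N mu \<noteq> {}"
proof -
  obtain k where k: "\<And>t. pmf mu t = real (k t) / real K" and sum_k: "(\<Sum>t\<in>UNIV. k t) = K"
    using in_PK_obtain_counts[OF assms] by blast
  have "(\<Sum>t\<in>UNIV. N * k t) = N * K"
    by (simp add: sum_k flip: sum_distrib_left)
  then show ?thesis
    unfolding typeclass_seqs_eq_counts[OF assms(1) k] by (rule lists_with_counts_nonempty)
qed

lemma map_pmf_nth_typeclass_seq:
  assumes "ts \<in> typeclass_seqs K N mu" and "ts \<noteq> []"
  shows "map_pmf ((!) ts) (pmf_of_set {..<length ts}) = mu"
proof (rule pmf_eqI)
  fix t
  have "pmf (map_pmf ((!) ts) (pmf_of_set {..<length ts})) t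
      = card ({..<length ts} \<inter> (!) ts -` {t}) / length ts"
    using assms(2) by (simp add: pmf_map, subst measure_pmf_of_set) auto
  also have "card ({..<length ts} \<inter> (!) ts -` {t}) = count_list ts t"
    by (simp add: count_list_eq_length_filter length_filter_conv_card Int_def eq_commute)
  finally show "pmf (map_pmf ((!) ts) (pmf_of_set {..<length ts})) t = pmf mu t"
    using assms by (auto simp: typeclass_seqs_def)
qed

lemma measurable_argmax_selector:
  fixes f :: "'a \<Rightarrow> 'b::countable \<Rightarrow> real"
  assumes "finite S" and "S \<noteq> {}" and f_meas: "\<And>s. s \<in> S \<Longrightarrow> (\<lambda>x. f x s) \<in> borel_measurable M"
  obtains \<tau> where "\<tau> \<in> measurable M (count_space UNIV)" and "\<And>x. \<tau> x \<in> S"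
    and "\<And>x s. s \<in> S \<Longrightarrow> f x s \<le> f x (\<tau> x)"
proof -
  define is_max where "is_max x s \<longleftrightarrow> s \<in> S \<and> (\<forall>s'\<in>S. f x s' \<le> f x s)" for x s
  define \<tau> :: "'a \<Rightarrow> 'b" where "\<tau> x = from_nat (LEAST k. is_max x (from_nat k))" for x
  have "\<exists>k. is_max x (from_nat k)" for x
  proof -
    obtain s where "s \<in> S" "f x s = Max (f x ` S)"
      using Max_in[of "f x ` S"] assms(1,2) by (metis empty_is_image finite_imageI imageE)
    then show ?thesis using assms(1) by (intro exI[of _ "to_nat s"]) (simp add: is_max_def)
  qed
  then have "is_max x (\<tau> x)" for x
    unfolding \<tau>_def by (rule LeastI_ex)
  moreover have "\<tau> \<in> measurable M (count_space UNIV)"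
  proof -
    have "Measurable.pred M (\<lambda>x. is_max x s)" for s
    proof (cases "s \<in> S")
      case True
      with assms(1) f_meas show ?thesis unfolding is_max_def by measurable
    qed (simp add: is_max_def)
    then show ?thesis unfolding \<tau>_def by measurable
  qed
  ultimately show ?thesis using that unfolding is_max_def by blast
qed

lemma distr_pair_measure_eq_if_sections_fst:
  assumes "pair_sigma_finite M1 M2" and "prob_space M1"
    and f: "f \<in> measurable (M1 \<Otimes>\<^sub>M M2) N" and "sets D = sets N"
    and sections: "AE x in M1. distr M2 N (\<lambda>y. f (x, y)) = D"
  shows "distr (M1 \<Otimes>\<^sub>M M2) N f = D"
proof (rule measure_eqI)
  interpret pair_sigma_finite M1 M2 by fact
  interpret M1: prob_space M1 by fact
  show "sets (distr (M1 \<Otimes>\<^sub>M M2) N f) = sets D" using assms(4) by simp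
  fix A assume "A \<in> sets (distr (M1 \<Otimes>\<^sub>M M2) N f)"
  then have A: "A \<in> sets N" by simp
  have "emeasure (distr (M1 \<Otimes>\<^sub>M M2) N f) A
      = (\<integral>\<^sup>+x. emeasure M2 (Pair x -` (f -` A \<inter> space (M1 \<Otimes>\<^sub>M M2))) \<partial>M1)"
    using f A by (simp add: emeasure_distr M2.emeasure_pair_measure_alt measurable_sets)
  also have "\<dots> = (\<integral>\<^sup>+x. emeasure D A \<partial>M1)"
  proof (rule nn_integral_cong_AE)
    show "AE x in M1. emeasure M2 (Pair x -` (f -` A \<inter> space (M1 \<Otimes>\<^sub>M M2))) = emeasure D A"
      using sections AE_space
    proof eventually_elim
      case (elim x)
      have "Pair x -` (f -` A \<inter> space (M1 \<Otimes>\<^sub>M M2)) = (\<lambda>y. f (x, y)) -` A \<inter> space M2"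
        using elim(2) by (auto simp: space_pair_measure)
      then show ?case
        using elim measurable_Pair2[OF f elim(2)] A by (simp flip: emeasure_distr)
    qed
  qed
  also have "\<dots> = emeasure D A" by (simp add: M1.emeasure_space_1)
  finally show "emeasure (distr (M1 \<Otimes>\<^sub>M M2) N f) A = emeasure D A" .
qed

lemma distr_pair_measure_eq_if_sections_snd:
  assumes "pair_sigma_finite M1 M2" and "prob_space M2"
    and f: "f \<in> measurable (M1 \<Otimes>\<^sub>M M2) N" and "sets D = sets N"
    and sections: "AE y in M2. distr M1 N (\<lambda>x. f (x, y)) = D"
  shows "distr (M1 \<Otimes>\<^sub>M M2) N f = D"
proof -
  interpret pair_sigma_finite M1 M2 by fact
  interpret swapped: pair_sigma_finite M2 M1 ..
  have "distr (M1 \<Otimes>\<^sub>M M2) N f = distr (M2 \<Otimes>\<^sub>M M1) N (\<lambda>(y, x). f (x, y))"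
    by (subst distr_pair_swap) (simp add: distr_distr measurable_pair_swap' f comp_def case_prod_beta')
  also have "\<dots> = D"
    using sections
    by (intro distr_pair_measure_eq_if_sections_fst[OF swapped.pair_sigma_finite_axioms assms(2)
          measurable_pair_swap[OF f] assms(4)]) simp
  finally show ?thesis .
qed

lemma integral_PiM_component:
  fixes g :: "'a \<Rightarrow> real"
  assumes "prob_space R" and "i \<in> I" and "integrable R g"
  shows "integrable (PiM I (\<lambda>_. R)) (\<lambda>\<omega>. g (\<omega> i))"
    and "(\<integral>\<omega>. g (\<omega> i) \<partial>PiM I (\<lambda>_. R)) = (\<integral>x. g x \<partial>R)"
proof -
  have comp: "(\<lambda>\<omega>. \<omega> i) \<in> measurable (PiM I (\<lambda>_. R)) R"
    using assms(2) by (rule measurable_component_singleton)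
  have law: "distr (PiM I (\<lambda>_. R)) R (\<lambda>\<omega>. \<omega> i) = R"
    using assms(1,2) by (intro distr_PiM_component)
  show "integrable (PiM I (\<lambda>_. R)) (\<lambda>\<omega>. g (\<omega> i))"
    using integrable_distr_eq[OF comp, of g] assms(3) by (simp add: law)
  show "(\<integral>\<omega>. g (\<omega> i) \<partial>PiM I (\<lambda>_. R)) = (\<integral>x. g x \<partial>R)"
    using integral_distr[OF comp, of g] assms(3) by (simp add: law)
qed

lemma integral_sum_PiM_components:
  fixes g :: "'a \<Rightarrow> real" and n :: nat
  assumes "prob_space R" and "integrable R g"
  shows "integrable (PiM {..<n} (\<lambda>_. R)) (\<lambda>\<omega>. \<Sum>i<n. g (\<omega> i))"
    and "(\<integral>\<omega>. (\<Sum>i<n. g (\<omega> i)) \<partial>PiM {..<n} (\<lambda>_. R)) = n * (\<integral>x. g x \<partial>R)"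
proof -
  note component = integral_PiM_component[OF assms(1) _ assms(2), of _ "{..<n}"]
  show "integrable (PiM {..<n} (\<lambda>_. R)) (\<lambda>\<omega>. \<Sum>i<n. g (\<omega> i))"
    using component(1) by (intro Bochner_Integration.integrable_sum) simp
  show "(\<integral>\<omega>. (\<Sum>i<n. g (\<omega> i)) \<partial>PiM {..<n} (\<lambda>_. R)) = n * (\<integral>x. g x \<partial>R)"
    using component by (subst Bochner_Integration.integral_sum) simp_all
qed

lemma integral_square_sum_iid_centered_le:
  fixes c :: "'a \<Rightarrow> real"
  assumes "prob_space R" and "finite I" and c_meas: "c \<in> borel_measurable R"
    and c_bound: "\<And>x. \<bar>c x\<bar> \<le> 1" and centered: "(\<integral>x. c x \<partial>R) = 0"
  shows "(\<integral>\<omega>. (\<Sum>i\<in>I. c (\<omega> i))\<^sup>2 \<partial>PiM I (\<lambda>_. R)) \<le> card I"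
proof -
  interpret R: prob_space R by fact
  interpret product_prob_space "\<lambda>_. R" I ..
  interpret P: prob_space "PiM I (\<lambda>_. R)" by (intro prob_space_PiM assms(1))
  have c_comp_meas: "(\<lambda>\<omega>. c (\<omega> i)) \<in> borel_measurable (PiM I (\<lambda>_. R))" if "i \<in> I" for i
    using measurable_component_singleton[OF that] c_meas by (rule measurable_compose)
  have c_square: "c x * c x \<le> 1" for x
    using c_bound[of x] by (simp add: abs_square_le_1 flip: power2_eq_square)
  have c_int: "integrable R c"
    using c_bound by (intro R.integrable_const_bound[where B=1]) (auto simp: c_meas)
  have prod_int: "integrable (PiM I (\<lambda>_. R)) (\<lambda>\<omega>. c (\<omega> i) * c (\<omega> j))" if "i \<in> I" "j \<in> I" for i j
    using that c_bound c_comp_meas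
    by (intro P.integrable_const_bound[where B=1]) (auto simp: abs_mult intro!: mult_le_one)
  have pair_le: "(\<integral>\<omega>. c (\<omega> i) * c (\<omega> j) \<partial>PiM I (\<lambda>_. R)) \<le> of_bool (i = j)"
    if "i \<in> I" "j \<in> I" for i j
  proof (cases "i = j")
    case True
    have "(\<integral>\<omega>. c (\<omega> i) * c (\<omega> j) \<partial>PiM I (\<lambda>_. R)) \<le> (\<integral>\<omega>. 1 \<partial>PiM I (\<lambda>_. R))"
      using prod_int[OF that] True c_square by (intro integral_mono) auto
    then show ?thesis using True by (simp add: P.prob_space)
  next
    case False
    define g where "g k = (if k = i \<or> k = j then c else (\<lambda>_. 1))" for k
    have "(\<integral>\<omega>. c (\<omega> i) * c (\<omega> j) \<partial>PiM I (\<lambda>_. R)) = (\<integral>\<omega>. (\<Prod>k\<in>I. g k (\<omega> k)) \<partial>PiM I (\<lambda>_. R))"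
    proof (intro Bochner_Integration.integral_cong refl)
      fix \<omega>
      have "(\<Prod>k\<in>I. g k (\<omega> k)) = (\<Prod>k\<in>{i, j}. g k (\<omega> k))"
        using that assms(2) by (intro prod.mono_neutral_right) (auto simp: g_def)
      then show "c (\<omega> i) * c (\<omega> j) = (\<Prod>k\<in>I. g k (\<omega> k))"
        using False by (simp add: g_def)
    qed
    also have "\<dots> = (\<Prod>k\<in>I. \<integral>x. g k x \<partial>R)"
      using assms(2) c_int by (intro product_integral_prod) (auto simp: g_def)
    also have "\<dots> = 0"
      using assms(2) that centered by (intro prod_zero bexI[of _ i]) (auto simp: g_def)
    finally show ?thesis using False by simp
  qed
  have "(\<integral>\<omega>. (\<Sum>i\<in>I. c (\<omega> i))\<^sup>2 \<partial>PiM I (\<lambda>_. R))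
      = (\<Sum>i\<in>I. \<Sum>j\<in>I. \<integral>\<omega>. c (\<omega> i) * c (\<omega> j) \<partial>PiM I (\<lambda>_. R))"
    using prod_int by (simp add: power2_eq_square sum_product)
  also have "\<dots> \<le> (\<Sum>i\<in>I. \<Sum>j\<in>I. of_bool (i = j))"
    using pair_le by (intro sum_mono) auto
  also have "\<dots> = card I"
    using assms(2) by simp
  finally show ?thesis .
qed

lemma abs_le_square_div_plus:
  fixes y a :: real
  assumes "0 < a"
  shows "\<bar>y\<bar> \<le> y\<^sup>2 / a + a"
proof (cases "\<bar>y\<bar> \<le> a")
  case True
  then show ?thesis using assms by (simp add: add_increasing)
next
  case False
  then have "\<bar>y\<bar> * a \<le> \<bar>y\<bar> * \<bar>y\<bar>" using assms by (intro mult_left_mono) auto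
  then have "\<bar>y\<bar> \<le> y\<^sup>2 / a" using assms by (simp add: pos_le_divide_eq power2_eq_square)
  then show ?thesis using assms by simp
qed

(* The free parameter a stands in for the square root in E |S| \<le> sqrt (E S\<^sup>2). *)
lemma integral_abs_sum_iid_centered_le:
  fixes c :: "'a \<Rightarrow> real"
  assumes "prob_space R" and "finite I" and c_meas: "c \<in> borel_measurable R"
    and c_bound: "\<And>x. \<bar>c x\<bar> \<le> 1" and centered: "(\<integral>x. c x \<partial>R) = 0" and "0 < a"
  shows "integrable (PiM I (\<lambda>_. R)) (\<lambda>\<omega>. \<bar>\<Sum>i\<in>I. c (\<omega> i)\<bar>)"
    and "(\<integral>\<omega>. \<bar>\<Sum>i\<in>I. c (\<omega> i)\<bar> \<partial>PiM I (\<lambda>_. R)) \<le> card I / a + a"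
proof -
  interpret P: prob_space "PiM I (\<lambda>_. R)" by (intro prob_space_PiM assms(1))
  have sum_meas: "(\<lambda>\<omega>. \<Sum>i\<in>I. c (\<omega> i)) \<in> borel_measurable (PiM I (\<lambda>_. R))"
    using c_meas by measurable
  have sum_bound: "\<bar>\<Sum>i\<in>I. c (\<omega> i)\<bar> \<le> card I" for \<omega>
  proof -
    have "\<bar>\<Sum>i\<in>I. c (\<omega> i)\<bar> \<le> (\<Sum>i\<in>I. \<bar>c (\<omega> i)\<bar>)" by (rule sum_abs)
    also have "\<dots> \<le> (\<Sum>i\<in>I. 1)" by (intro sum_mono c_bound)
    finally show ?thesis by simp
  qed
  then have square_bound: "(\<Sum>i\<in>I. c (\<omega> i))\<^sup>2 \<le> (card I)\<^sup>2" for \<omega>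
    by (simp add: abs_le_square_iff[symmetric])
  show abs_int: "integrable (PiM I (\<lambda>_. R)) (\<lambda>\<omega>. \<bar>\<Sum>i\<in>I. c (\<omega> i)\<bar>)"
    using sum_meas sum_bound by (intro P.integrable_const_bound[where B="card I"]) auto
  have square_int: "integrable (PiM I (\<lambda>_. R)) (\<lambda>\<omega>. (\<Sum>i\<in>I. c (\<omega> i))\<^sup>2)"
    using sum_meas square_bound by (intro P.integrable_const_bound[where B="card I ^ 2"]) auto
  have "(\<integral>\<omega>. \<bar>\<Sum>i\<in>I. c (\<omega> i)\<bar> \<partial>PiM I (\<lambda>_. R))
      \<le> (\<integral>\<omega>. (\<Sum>i\<in>I. c (\<omega> i))\<^sup>2 / a + a \<partial>PiM I (\<lambda>_. R))"
    using abs_int square_int assms(6) by (intro integral_mono abs_le_square_div_plus) auto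
  also have "\<dots> = (\<integral>\<omega>. (\<Sum>i\<in>I. c (\<omega> i))\<^sup>2 \<partial>PiM I (\<lambda>_. R)) / a + a"
    using square_int by (simp add: P.prob_space)
  also have "\<dots> \<le> card I / a + a"
    using integral_square_sum_iid_centered_le[OF assms(1-5)] assms(6) by (simp add: divide_right_mono)
  finally show "(\<integral>\<omega>. \<bar>\<Sum>i\<in>I. c (\<omega> i)\<bar> \<partial>PiM I (\<lambda>_. R)) \<le> card I / a + a" .
qed

lemma integral_excess_tendsto_zero:
  fixes f :: "'a \<Rightarrow> real"
  assumes "integrable M f"
  shows "(\<lambda>m::nat. \<integral>x. max 0 (f x - real m) \<partial>M) \<longlonglongrightarrow> 0"
proof -
  have "(\<lambda>m::nat. \<integral>x. max 0 (f x - real m) \<partial>M) \<longlonglongrightarrow> (\<integral>x. 0 \<partial>M)"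
  proof (rule integral_dominated_convergence[where w="\<lambda>x. \<bar>f x\<bar>"])
    show "AE x in M. (\<lambda>m. max 0 (f x - real m)) \<longlonglongrightarrow> 0"
    proof (rule AE_I2)
      fix x
      have "eventually (\<lambda>m. f x \<le> real m) sequentially"
        using filterlim_real_sequentially by (simp add: filterlim_at_top)
      then show "(\<lambda>m. max 0 (f x - real m)) \<longlonglongrightarrow> 0"
        by (rule tendsto_eventually[OF eventually_mono]) simp
    qed
  qed (use assms in auto)
  then show ?thesis by simp
qed

lemma (in prob_space) integral_iid_eq_integral_PiM:
  fixes g :: "('i \<Rightarrow> 'b) \<Rightarrow> real"
  assumes "I \<noteq> {}" and "indep_vars (\<lambda>_. N) Y I"
    and "\<And>i. i \<in> I \<Longrightarrow> random_variable N (Y i)" and "\<And>i. i \<in> I \<Longrightarrow> distr M N (Y i) = D"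
    and g: "g \<in> borel_measurable (PiM I (\<lambda>_. N))"
  shows "(\<integral>\<omega>. g (\<lambda>i\<in>I. Y i \<omega>) \<partial>M) = (\<integral>x. g x \<partial>PiM I (\<lambda>_. D))"
proof -
  have "distr M (PiM I (\<lambda>_. N)) (\<lambda>\<omega>. \<lambda>i\<in>I. Y i \<omega>) = PiM I (\<lambda>i. distr M N (Y i))"
    using assms(2) indep_vars_iff_distr_eq_PiM'[OF assms(1,3)] by simp
  also have "\<dots> = PiM I (\<lambda>_. D)"
    using assms(4) by (intro PiM_cong) simp_all
  finally have law: "distr M (PiM I (\<lambda>_. N)) (\<lambda>\<omega>. \<lambda>i\<in>I. Y i \<omega>) = PiM I (\<lambda>_. D)" .
  have "(\<lambda>\<omega>. \<lambda>i\<in>I. Y i \<omega>) \<in> measurable M (PiM I (\<lambda>_. N))"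
    using assms(3) by (intro measurable_restrict) simp
  from integral_distr[OF this g] show ?thesis by (simp add: law)
qed

lemma LIMSEQ_of_eventually_le_and_approx:
  fixes s :: "nat \<Rightarrow> real"
  assumes "eventually (\<lambda>N. s N \<le> F) sequentially"
    and "\<And>e. 0 < e \<Longrightarrow> eventually (\<lambda>N. F - e < s N) sequentially"
  shows "s \<longlonglongrightarrow> F"
proof (rule tendstoI)
  fix e :: real assume "0 < e"
  from assms(1) assms(2)[OF this] show "eventually (\<lambda>N. dist (s N) F < e) sequentially"
    by eventually_elim (simp add: dist_real_def abs_less_iff)
qed

lemma measurable_eval_pair [measurable]:
  "(\<lambda>p :: (real ^ 'n::finite) \<times> 'n. fst p $ snd p) \<in> borel_measurable (borel \<Otimes>\<^sub>M count_space UNIV)"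
proof (rule measurable_compose_countable'[where f="\<lambda>t p. fst p $ t" and g=snd and I=UNIV])
  fix t :: 'n
  have "(\<lambda>v :: real ^ 'n. v $ t) \<in> borel_measurable borel" by simp
  then show "(\<lambda>p :: (real ^ 'n) \<times> 'n. fst p $ t) \<in> borel_measurable (borel \<Otimes>\<^sub>M count_space UNIV)"
    by (rule measurable_compose[OF measurable_fst])
qed simp_all

locale integrable_vector_law = prob_space P
  for P :: "(real ^ 'n::finite) measure" +
  assumes sets_P [measurable_cong]: "sets P = sets borel"
    and integrable_norm: "integrable P norm"
begin

definition iid :: "nat \<Rightarrow> (nat \<Rightarrow> real ^ 'n) measure" where
  "iid n = PiM {..<n} (\<lambda>_. P)"

lemma prob_space_iid: "prob_space (iid n)"
  unfolding iid_def by (intro prob_space_PiM prob_space_axioms)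

lemma sets_iid [measurable_cong]: "sets (iid n) = sets (PiM {..<n} (\<lambda>_. borel))"
  unfolding iid_def by (rule sets_PiM_cong) (rule refl, rule sets_P)

lemma measurable_iid_component [measurable]: "(\<lambda>x. x i) \<in> borel_measurable (iid n)"
proof (cases "i < n")
  case True
  then have "(\<lambda>x. x i) \<in> measurable (iid n) P"
    unfolding iid_def by (intro measurable_component_singleton) simp
  then show ?thesis using measurable_cong_sets[OF refl sets_P] by blast
next
  case False
  have "x i = undefined" if "x \<in> space (iid n)" for x
    using that False by (auto simp: iid_def space_PiM PiE_def extensional_def)
  then show ?thesis
    using Sigma_Algebra.measurable_cong[of "iid n" "\<lambda>x. x i" "\<lambda>_. undefined" borel] by simp
qed

lemma distr_iid_component:
  assumes "i < n"
  shows "distr (iid n) borel (\<lambda>x. x i) = P"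
proof -
  have "distr (iid n) borel (\<lambda>x. x i) = distr (iid n) P (\<lambda>x. x i)"
    by (rule distr_cong) (simp_all only: sets_P)
  also have "\<dots> = P"
    unfolding iid_def using assms by (intro distr_PiM_component prob_space_axioms) simp_all
  finally show ?thesis .
qed

lemma measurable_sample_mean: "(\<lambda>x. sample_mean x ts) \<in> borel_measurable (iid n)"
  unfolding sample_mean_def
  by (intro borel_measurable_divide borel_measurable_sum measurable_compose[OF measurable_iid_component]) simp_all

lemma integrable_Max_sample_mean:
  assumes "finite S" and "S \<noteq> {}" and "\<And>s. s \<in> S \<Longrightarrow> length s = n"
  shows "integrable (iid n) (\<lambda>x. MAX s\<in>S. sample_mean x s)"
proof (rule Bochner_Integration.integrable_bound)
  show "integrable (iid n) (\<lambda>x. (\<Sum>i<n. norm (x i)) / n)"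
    unfolding iid_def
    by (intro integrable_divide integral_sum_PiM_components(1) prob_space_axioms integrable_norm)
  show "AE x in iid n. norm (MAX s\<in>S. sample_mean x s) \<le> norm ((\<Sum>i<n. norm (x i)) / n)"
  proof (intro AE_I2)
    fix x
    obtain s where "s \<in> S" "(MAX s\<in>S. sample_mean x s) = sample_mean x s"
      using Max_in[of "(\<lambda>s. sample_mean x s) ` S"] assms(1,2)
      by (metis empty_is_image finite_imageI imageE)
    then show "norm (MAX s\<in>S. sample_mean x s) \<le> norm ((\<Sum>i<n. norm (x i)) / n)"
      using abs_sample_mean_le[of x s] assms(3) by (simp add: sum_nonneg)
  qed
qed (use assms(1) measurable_sample_mean in measurable)

lemma integrable_excess:
  assumes "0 \<le> L"
  shows "integrable P (\<lambda>v. max 0 (norm v - L))"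
proof (rule Bochner_Integration.integrable_bound[OF integrable_norm])
  show "(\<lambda>v. max 0 (norm v - L)) \<in> borel_measurable P"
    by (subst measurable_cong_sets[OF sets_P refl]) simp
qed (use assms in auto)

lemma coupling_sets: "coupling P mu Q \<Longrightarrow> sets Q = sets (borel \<Otimes>\<^sub>M count_space UNIV)"
  unfolding coupling_def by simp

lemma coupling_distr_fst:
  assumes "coupling P mu Q"
  shows "fst \<in> measurable Q P" and "distr Q P fst = P"
proof -
  show "fst \<in> measurable Q P"
    by (subst measurable_cong_sets[OF coupling_sets[OF assms] sets_P]) simp
  have "distr Q P fst = distr Q borel fst"
    by (rule distr_cong) (simp_all only: sets_P)
  then show "distr Q P fst = P"
    using assms by (simp add: coupling_def)
qed

lemma coupling_integral_fst:
  fixes g :: "real ^ 'n \<Rightarrow> real"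
  assumes "coupling P mu Q" and "integrable P g"
  shows "integrable Q (\<lambda>p. g (fst p))" and "(\<integral>p. g (fst p) \<partial>Q) = (\<integral>v. g v \<partial>P)"
proof -
  note fst_meas = coupling_distr_fst(1)[OF assms(1)] and law = coupling_distr_fst(2)[OF assms(1)]
  show "integrable Q (\<lambda>p. g (fst p))"
    using integrable_distr_eq[OF fst_meas, of g] assms(2) by (simp add: law)
  show "(\<integral>p. g (fst p) \<partial>Q) = (\<integral>v. g v \<partial>P)"
    using integral_distr[OF fst_meas, of g] assms(2) by (simp add: law)
qed

lemma coupling_integrable_eval:
  assumes "coupling P mu Q"
  shows "integrable Q (\<lambda>p. fst p $ snd p)"
proof (rule Bochner_Integration.integrable_bound)
  show "integrable Q (\<lambda>p. norm (fst p))"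
    using coupling_integral_fst(1)[OF assms integrable_norm] .
  show "(\<lambda>p. fst p $ snd p) \<in> borel_measurable Q"
    by (subst measurable_cong_sets[OF coupling_sets[OF assms] refl]) simp
qed (simp add: component_le_norm_cart)

lemma bdd_above_coupling_integrals:
  "bdd_above ((\<lambda>Q. \<integral>p. fst p $ snd p \<partial>Q) ` {Q. coupling P mu Q})"
proof (rule bdd_aboveI2)
  fix Q assume Q: "Q \<in> {Q. coupling P mu Q}"
  have "(\<integral>p. fst p $ snd p \<partial>Q) \<le> (\<integral>p. norm (fst p) \<partial>Q)"
    using Q coupling_integrable_eval coupling_integral_fst(1)[OF _ integrable_norm]
    by (intro integral_mono) (auto simp: component_le_norm_cart order_trans[OF abs_ge_self])
  then show "(\<integral>p. fst p $ snd p \<partial>Q) \<le> (\<integral>v. norm v \<partial>P)"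
    using Q coupling_integral_fst(2)[OF _ integrable_norm] by simp
qed

lemma coupling_integral_le_fernique:
  "coupling P mu Q \<Longrightarrow> (\<integral>p. fst p $ snd p \<partial>Q) \<le> fernique P mu"
  unfolding fernique_def by (rule cSUP_upper[OF _ bdd_above_coupling_integrals]) simp

lemma fernique_approx:
  assumes "{Q. coupling P mu Q} \<noteq> {}" and "0 < e"
  obtains Q where "coupling P mu Q" and "fernique P mu - e < (\<integral>p. fst p $ snd p \<partial>Q)"
proof -
  have "fernique P mu - e < fernique P mu" using \<open>0 < e\<close> by simp
  then show ?thesis
    using that less_cSUP_iff[OF assms(1) bdd_above_coupling_integrals] unfolding fernique_def by auto
qed

definition index_coupling :: "nat \<Rightarrow> ((nat \<Rightarrow> real ^ 'n) \<Rightarrow> 'n list) \<Rightarrow> ((real ^ 'n) \<times> 'n) measure" where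
  "index_coupling n \<tau> = distr (measure_pmf (pmf_of_set {..<n}) \<Otimes>\<^sub>M iid n) (borel \<Otimes>\<^sub>M count_space UNIV)
     (\<lambda>(i, x). (x i, \<tau> x ! i))"

lemma pair_sigma_finite_index_iid: "pair_sigma_finite (measure_pmf (pmf_of_set {..<n})) (iid n)"
  unfolding pair_sigma_finite_def
  by (intro conjI prob_space_imp_sigma_finite prob_space_iid prob_space_measure_pmf)

lemma measurable_index_pair:
  assumes "\<tau> \<in> measurable (iid n) (count_space UNIV)"
  shows "(\<lambda>(i, x). (x i, \<tau> x ! i))
    \<in> measurable (measure_pmf (pmf_of_set {..<n}) \<Otimes>\<^sub>M iid n) (borel \<Otimes>\<^sub>M count_space UNIV)"
proof -
  have "(\<lambda>(i, x). (x i, \<tau> x ! i)) \<in> measurable (count_space UNIV \<Otimes>\<^sub>M iid n) (borel \<Otimes>\<^sub>M count_space UNIV)"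
  proof (rule measurable_pair_measure_countable1)
    fix i :: nat
    have "(\<lambda>x. \<tau> x ! i) \<in> measurable (iid n) (count_space UNIV)"
      using assms by (rule measurable_compose) simp
    then show "(\<lambda>x. case (i, x) of (i, x) \<Rightarrow> (x i, \<tau> x ! i)) \<in> measurable (iid n) (borel \<Otimes>\<^sub>M count_space UNIV)"
      unfolding prod.case by (intro measurable_Pair measurable_iid_component)
  qed simp
  then show ?thesis
    unfolding measurable_cong_sets[OF sets_pair_measure_cong[OF sets_measure_pmf_count_space refl] refl] .
qed

lemma coupling_index_coupling:
  assumes \<tau>_meas: "\<tau> \<in> measurable (iid n) (count_space UNIV)" and "0 < n"
    and \<tau>_law: "\<And>x. map_pmf ((!) (\<tau> x)) (pmf_of_set {..<n}) = mu"
  shows "coupling P mu (index_coupling n \<tau>)"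
proof -
  let ?U = "measure_pmf (pmf_of_set {..<n})"
  interpret pair_sigma_finite ?U "iid n"
    by (rule pair_sigma_finite_index_iid)
  note pair_meas = measurable_index_pair[OF \<tau>_meas]
  have fst_meas: "(\<lambda>(i, x). x i) \<in> borel_measurable (?U \<Otimes>\<^sub>M iid n)"
    using measurable_compose[OF pair_meas measurable_fst] by (simp add: case_prod_unfold)
  have snd_meas: "(\<lambda>(i, x). \<tau> x ! i) \<in> measurable (?U \<Otimes>\<^sub>M iid n) (count_space UNIV)"
    using measurable_compose[OF pair_meas measurable_snd] by (simp add: case_prod_unfold)
  have "distr (?U \<Otimes>\<^sub>M iid n) borel (\<lambda>(i, x). x i) = P"
  proof (rule distr_pair_measure_eq_if_sections_fst[OF pair_sigma_finite_axioms prob_space_measure_pmf fst_meas sets_P])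
    show "AE i in ?U. distr (iid n) borel (\<lambda>y. case (i, y) of (i, x) \<Rightarrow> x i) = P"
      using \<open>0 < n\<close> distr_iid_component by (intro AE_pmfI) (simp add: set_pmf_of_set[of "{..<n}"] lessThan_empty_iff)
  qed
  moreover have "distr (?U \<Otimes>\<^sub>M iid n) (count_space UNIV) (\<lambda>(i, x). \<tau> x ! i) = measure_pmf mu"
  proof (rule distr_pair_measure_eq_if_sections_snd[OF pair_sigma_finite_axioms prob_space_iid snd_meas])
    show "AE x in iid n. distr ?U (count_space UNIV) (\<lambda>i. case (i, x) of (i, x) \<Rightarrow> \<tau> x ! i) = measure_pmf mu"
      using \<tau>_law by (simp flip: map_pmf_rep_eq)
  qed simp
  moreover have "prob_space (index_coupling n \<tau>)"
    unfolding index_coupling_def using pair_meas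
    by (intro prob_space.prob_space_distr prob_space_pair prob_space_iid prob_space_measure_pmf)
  ultimately show ?thesis
    unfolding coupling_def index_coupling_def
    using pair_meas by (simp add: distr_distr comp_def case_prod_unfold)
qed

lemma integral_index_coupling:
  assumes \<tau>_meas: "\<tau> \<in> measurable (iid n) (count_space UNIV)" and "0 < n"
    and \<tau>_law: "\<And>x. map_pmf ((!) (\<tau> x)) (pmf_of_set {..<n}) = mu"
    and \<tau>_length: "\<And>x. length (\<tau> x) = n"
  shows "(\<integral>p. fst p $ snd p \<partial>index_coupling n \<tau>) = (\<integral>x. sample_mean x (\<tau> x) \<partial>iid n)"
proof -
  let ?U = "measure_pmf (pmf_of_set {..<n})"
  interpret pair_sigma_finite ?U "iid n"
    by (rule pair_sigma_finite_index_iid)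
  note pair_meas = measurable_index_pair[OF \<tau>_meas]
  have pair_int: "integrable (?U \<Otimes>\<^sub>M iid n) (\<lambda>(i, x). x i $ (\<tau> x ! i))"
    using coupling_integrable_eval[OF coupling_index_coupling[OF assms(1-3)]]
    unfolding index_coupling_def integrable_distr_eq[OF pair_meas measurable_eval_pair]
    by (simp add: case_prod_unfold)
  have comp_int: "integrable (iid n) (\<lambda>x. x i $ (\<tau> x ! i))" if "i < n" for i
  proof (rule Bochner_Integration.integrable_bound)
    show "integrable (iid n) (\<lambda>x. norm (x i))"
      unfolding iid_def using that by (intro integral_PiM_component(1) prob_space_axioms integrable_norm) simp
    show "(\<lambda>x. x i $ (\<tau> x ! i)) \<in> borel_measurable (iid n)"
    proof (rule measurable_compose_countable'[where f="\<lambda>s x. x i $ (s ! i)" and g=\<tau> and I=UNIV])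
      fix s :: "'n list"
      have "(\<lambda>v :: real ^ 'n. v $ (s ! i)) \<in> borel_measurable borel" by simp
      with measurable_iid_component show "(\<lambda>x. x i $ (s ! i)) \<in> borel_measurable (iid n)"
        by (rule measurable_compose)
    qed (simp_all add: \<tau>_meas)
  qed (simp add: component_le_norm_cart)
  have "(\<integral>p. fst p $ snd p \<partial>index_coupling n \<tau>) = (\<integral>p. (\<lambda>(i, x). x i $ (\<tau> x ! i)) p \<partial>(?U \<Otimes>\<^sub>M iid n))"
    unfolding index_coupling_def integral_distr[OF pair_meas measurable_eval_pair]
    by (simp add: case_prod_unfold)
  also have "\<dots> = (\<integral>i. (\<integral>x. x i $ (\<tau> x ! i) \<partial>iid n) \<partial>?U)"
    using integral_fst'[OF pair_int] by simp
  also have "\<dots> = (\<Sum>i<n. \<integral>x. x i $ (\<tau> x ! i) \<partial>iid n) / n"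
    using \<open>0 < n\<close> by (simp add: integral_pmf_of_set[of "{..<n}"] lessThan_empty_iff)
  also have "\<dots> = (\<integral>x. sample_mean x (\<tau> x) \<partial>iid n)"
    using comp_int by (simp add: sample_mean_def \<tau>_length)
  finally show ?thesis .
qed

lemma exists_coupling_integral_eq_Max:
  assumes "finite S" and "S \<noteq> {}" and "0 < n" and length_S: "\<And>s. s \<in> S \<Longrightarrow> length s = n"
    and law_S: "\<And>s. s \<in> S \<Longrightarrow> map_pmf ((!) s) (pmf_of_set {..<n}) = mu"
  obtains Q where "coupling P mu Q"
    and "(\<integral>p. fst p $ snd p \<partial>Q) = (\<integral>x. (MAX s\<in>S. sample_mean x s) \<partial>iid n)"
proof -
  obtain \<tau> :: "(nat \<Rightarrow> real ^ 'n) \<Rightarrow> 'n list" where \<tau>_meas: "\<tau> \<in> measurable (iid n) (count_space UNIV)" and \<tau>_S: "\<And>x. \<tau> x \<in> S"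
    and \<tau>_max: "\<And>x s. s \<in> S \<Longrightarrow> sample_mean x s \<le> sample_mean x (\<tau> x)"
    by (rule measurable_argmax_selector[where f="\<lambda>x s. sample_mean x s" and M="iid n",
          OF assms(1,2) measurable_sample_mean]) blast
  have \<tau>_law: "map_pmf ((!) (\<tau> x)) (pmf_of_set {..<n}) = mu" for x
    using law_S[OF \<tau>_S] .
  have \<tau>_length: "length (\<tau> x) = n" for x
    using length_S[OF \<tau>_S] .
  have "(MAX s\<in>S. sample_mean x s) = sample_mean x (\<tau> x)" for x
    using assms(1) \<tau>_S \<tau>_max by (intro Max_eqI) auto
  then have "(\<integral>p. fst p $ snd p \<partial>index_coupling n \<tau>) = (\<integral>x. (MAX s\<in>S. sample_mean x s) \<partial>iid n)"
    using integral_index_coupling[OF \<tau>_meas \<open>0 < n\<close> \<tau>_law \<tau>_length] by simp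
  with coupling_index_coupling[OF \<tau>_meas \<open>0 < n\<close> \<tau>_law] show ?thesis
    by (rule that)
qed

lemma integral_compose_fst_coupling:
  fixes g :: "(nat \<Rightarrow> real ^ 'n) \<Rightarrow> real"
  assumes Q: "coupling P mu Q" and g: "integrable (iid n) g"
  shows "integrable (PiM {..<n} (\<lambda>_. Q)) (\<lambda>\<omega>. g (compose {..<n} fst \<omega>))"
    and "(\<integral>\<omega>. g (compose {..<n} fst \<omega>) \<partial>PiM {..<n} (\<lambda>_. Q)) = (\<integral>x. g x \<partial>iid n)"
proof -
  have prob_Q: "prob_space Q" using Q by (simp add: coupling_def)
  have "(\<lambda>\<omega>. fst (\<omega> i)) \<in> measurable (PiM {..<n} (\<lambda>_. Q)) P" if "i \<in> {..<n}" for i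
    using measurable_component_singleton[OF that] coupling_distr_fst(1)[OF Q] by (rule measurable_compose)
  then have meas: "compose {..<n} fst \<in> measurable (PiM {..<n} (\<lambda>_. Q)) (iid n)"
    unfolding iid_def compose_def by (rule measurable_restrict)
  have law: "distr (PiM {..<n} (\<lambda>_. Q)) (iid n) (compose {..<n} fst) = iid n"
    unfolding iid_def
    using coupling_distr_fst[OF Q] prob_Q prob_space_axioms
    by (subst distr_PiM_finite_prob_space) (auto intro: product_prob_spaceI)
  have g_meas: "g \<in> borel_measurable (iid n)"
    using g by simp
  show "integrable (PiM {..<n} (\<lambda>_. Q)) (\<lambda>\<omega>. g (compose {..<n} fst \<omega>))"
    using integrable_distr_eq[OF meas g_meas] g by (simp add: law)
  show "(\<integral>\<omega>. g (compose {..<n} fst \<omega>) \<partial>PiM {..<n} (\<lambda>_. Q)) = (\<integral>x. g x \<partial>iid n)"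
    using integral_distr[OF meas g_meas] by (simp add: law)
qed

lemma coupling_centered_indicator:
  assumes Q: "coupling P mu Q"
  shows "(\<lambda>p. indicator {t} (snd p) - pmf mu t) \<in> borel_measurable Q"
    and "\<bar>indicator {t} (snd p) - pmf mu t\<bar> \<le> 1"
    and "(\<integral>p. indicator {t} (snd p) - pmf mu t \<partial>Q) = 0"
proof -
  interpret Q: prob_space Q using Q by (simp add: coupling_def)
  have snd_meas: "snd \<in> measurable Q (count_space UNIV)"
    by (subst measurable_cong_sets[OF coupling_sets[OF Q] refl]) simp
  then show meas: "(\<lambda>p. indicator {t} (snd p) - pmf mu t) \<in> borel_measurable Q"
    by (intro borel_measurable_diff measurable_compose[OF snd_meas]) simp_all
  show "\<bar>indicator {t} (snd p) - pmf mu t\<bar> \<le> 1"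
    using pmf_le_1[of mu t] pmf_nonneg[of mu t] by (auto simp: indicator_def)
  have "(\<integral>p. indicator {t} (snd p) \<partial>Q) = (\<integral>s. (indicator {t} s :: real) \<partial>distr Q (count_space UNIV) snd)"
    by (rule integral_distr[OF snd_meas, where f="indicator {t} :: 'n \<Rightarrow> real", symmetric]) simp
  also have "\<dots> = pmf mu t"
    using Q by (simp add: coupling_def measure_pmf_single)
  finally show "(\<integral>p. indicator {t} (snd p) - pmf mu t \<partial>Q) = 0"
    using meas by (subst Bochner_Integration.integral_diff) (auto simp: Q.prob_space
        intro!: Q.integrable_const_bound[where B=1] measurable_compose[OF snd_meas])
qed

lemma integral_count_deviation_le:
  fixes n :: nat
  assumes Q: "coupling P mu Q" and "0 < a"
  shows "integrable (PiM {..<n} (\<lambda>_. Q)) (\<lambda>\<omega>. \<Sum>t\<in>UNIV. \<bar>\<Sum>i<n. indicator {t} (snd (\<omega> i)) - pmf mu t\<bar>)"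
    and "(\<integral>\<omega>. (\<Sum>t\<in>UNIV. \<bar>\<Sum>i<n. indicator {t} (snd (\<omega> i)) - pmf mu t\<bar>) \<partial>PiM {..<n} (\<lambda>_. Q))
      \<le> CARD('n) * (n / a + a)"
proof -
  have prob_Q: "prob_space Q" using Q by (simp add: coupling_def)
  note deviation = integral_abs_sum_iid_centered_le[OF prob_Q finite_lessThan
      coupling_centered_indicator[OF Q] \<open>0 < a\<close>]
  show "integrable (PiM {..<n} (\<lambda>_. Q)) (\<lambda>\<omega>. \<Sum>t\<in>UNIV. \<bar>\<Sum>i<n. indicator {t} (snd (\<omega> i)) - pmf mu t\<bar>)"
    by (intro Bochner_Integration.integrable_sum deviation(1))
  have "(\<integral>\<omega>. (\<Sum>t\<in>UNIV. \<bar>\<Sum>i<n. indicator {t} (snd (\<omega> i)) - pmf mu t\<bar>) \<partial>PiM {..<n} (\<lambda>_. Q))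
      = (\<Sum>t\<in>UNIV. \<integral>\<omega>. \<bar>\<Sum>i<n. indicator {t} (snd (\<omega> i)) - pmf mu t\<bar> \<partial>PiM {..<n} (\<lambda>_. Q))"
    by (intro Bochner_Integration.integral_sum deviation(1))
  also have "\<dots> \<le> (\<Sum>t\<in>(UNIV :: 'n set). n / a + a)"
    using deviation(2) by (intro sum_mono) (simp only: card_lessThan)
  finally show "(\<integral>\<omega>. (\<Sum>t\<in>UNIV. \<bar>\<Sum>i<n. indicator {t} (snd (\<omega> i)) - pmf mu t\<bar>) \<partial>PiM {..<n} (\<lambda>_. Q))
      \<le> CARD('n) * (n / a + a)" by simp
qed

lemma integral_Max_fixed_counts_ge:
  fixes L a :: real
  assumes Q: "coupling P mu Q" and "0 < n" and c: "\<And>t. pmf mu t = real (c t) / real n"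
    and "0 \<le> L" and "0 < a"
  shows "(\<integral>p. fst p $ snd p \<partial>Q) - 2 * L * CARD('n) * (1 / a + a / n) - 2 * (\<integral>v. max 0 (norm v - L) \<partial>P)
    \<le> (\<integral>x. (MAX s\<in>{s. length s = n \<and> (\<forall>t. count_list s t = c t)}. sample_mean x s) \<partial>iid n)"
proof -
  define S where "S = {s. length s = n \<and> (\<forall>t. count_list s t = c t)}"
  define Qn where "Qn = PiM {..<n} (\<lambda>_. Q)"
  define A where "A \<omega> = (\<Sum>i<n. fst (\<omega> i) $ snd (\<omega> i))" for \<omega> :: "nat \<Rightarrow> (real ^ 'n) \<times> 'n"
  define B where "B \<omega> = (\<Sum>t\<in>UNIV. \<bar>\<Sum>i<n. indicator {t} (snd (\<omega> i)) - pmf mu t\<bar>)"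
    for \<omega> :: "nat \<Rightarrow> (real ^ 'n) \<times> 'n"
  define C where "C \<omega> = (\<Sum>i<n. max 0 (norm (fst (\<omega> i)) - L))" for \<omega> :: "nat \<Rightarrow> (real ^ 'n) \<times> 'n"
  have prob_Q: "prob_space Q" using Q by (simp add: coupling_def)
  interpret Qn: prob_space Qn unfolding Qn_def by (intro prob_space_PiM prob_Q)
  have "S \<noteq> {}"
    unfolding S_def using sum_counts_eq[OF \<open>0 < n\<close> c] by (rule lists_with_counts_nonempty)
  then have Max_int: "integrable (iid n) (\<lambda>x. MAX s\<in>S. sample_mean x s)"
    by (intro integrable_Max_sample_mean) (simp_all add: S_def finite_lists_of_length)
  have pointwise: "A \<omega> / n - 2 * (L * B \<omega> + C \<omega>) / n \<le> (MAX s\<in>S. sample_mean (compose {..<n} fst \<omega>) s)"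
    for \<omega>
  proof -
    have "sample_mean (compose {..<n} fst \<omega>) s = sample_mean (\<lambda>i. fst (\<omega> i)) s" if "s \<in> S" for s
      using that by (intro sample_mean_cong[of s n]) (simp_all add: S_def compose_def)
    then show ?thesis
      using Max_sample_mean_ge_pairs[OF \<open>0 < n\<close> c \<open>0 \<le> L\<close>, of \<omega>]
      unfolding A_def B_def C_def S_def by simp
  qed
  note A = integral_sum_PiM_components[OF prob_Q coupling_integrable_eval[OF Q], of n, folded A_def Qn_def]
  note C = integral_sum_PiM_components[OF prob_Q coupling_integral_fst(1)[OF Q integrable_excess[OF \<open>0 \<le> L\<close>]],
      of n, folded C_def Qn_def, unfolded coupling_integral_fst(2)[OF Q integrable_excess[OF \<open>0 \<le> L\<close>]]]
  note B = integral_count_deviation_le[OF Q \<open>0 < a\<close>, of n, folded B_def Qn_def]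
  have "(\<integral>\<omega>. B \<omega> \<partial>Qn) / n \<le> CARD('n) * (n / a + a) / n"
    using B(2) by (simp add: divide_right_mono)
  also have "\<dots> = CARD('n) * (1 / a + a / n)"
    using \<open>0 < n\<close> by (simp add: field_simps)
  finally have "2 * L * ((\<integral>\<omega>. B \<omega> \<partial>Qn) / n) \<le> 2 * L * (CARD('n) * (1 / a + a / n))"
    using \<open>0 \<le> L\<close> by (intro mult_left_mono) simp_all
  then have "(\<integral>p. fst p $ snd p \<partial>Q) - 2 * L * CARD('n) * (1 / a + a / n) - 2 * (\<integral>v. max 0 (norm v - L) \<partial>P)
      \<le> (\<integral>p. fst p $ snd p \<partial>Q) - 2 * L * ((\<integral>\<omega>. B \<omega> \<partial>Qn) / n) - 2 * (\<integral>v. max 0 (norm v - L) \<partial>P)"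
    by (simp add: mult.assoc)
  also have "\<dots> = (\<integral>\<omega>. A \<omega> / n - 2 * (L * B \<omega> + C \<omega>) / n \<partial>Qn)"
    using A B(1) C \<open>0 < n\<close> by (simp add: field_simps)
  also have "\<dots> \<le> (\<integral>\<omega>. (MAX s\<in>S. sample_mean (compose {..<n} fst \<omega>) s) \<partial>Qn)"
    using A(1) B(1) C(1) integral_compose_fst_coupling(1)[OF Q Max_int] pointwise
    by (intro integral_mono) (simp_all add: Qn_def)
  also have "\<dots> = (\<integral>x. (MAX s\<in>S. sample_mean x s) \<partial>iid n)"
    unfolding Qn_def by (rule integral_compose_fst_coupling(2)[OF Q Max_int])
  finally show ?thesis unfolding S_def .
qed

lemma exists_coupling_integral_eq_Max_typeclass:
  assumes "0 < K" and "in_PK K mu" and "0 < N"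
  obtains Q where "coupling P mu Q"
    and "(\<integral>p. fst p $ snd p \<partial>Q) = (\<integral>x. (MAX s\<in>typeclass_seqs K N mu. sample_mean x s) \<partial>iid (N * K))"
proof -
  have "0 < N * K" using assms(1,3) by simp
  have length_s: "length s = N * K" if "s \<in> typeclass_seqs K N mu" for s
    using that by (simp add: typeclass_seqs_def)
  have law_s: "map_pmf ((!) s) (pmf_of_set {..<N * K}) = mu" if "s \<in> typeclass_seqs K N mu" for s
  proof -
    have "s \<noteq> []" using length_s[OF that] \<open>0 < N * K\<close> by auto
    with map_pmf_nth_typeclass_seq[OF that] show ?thesis by (simp add: length_s[OF that])
  qed
  show ?thesis
    by (rule exists_coupling_integral_eq_Max[OF finite_typeclass_seqs[of K N mu]
          typeclass_seqs_nonempty[OF assms(1,2), of N] \<open>0 < N * K\<close> length_s law_s]) (auto intro: that)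
qed

lemma integral_Max_typeclass_ge:
  fixes L a :: real
  assumes "0 < K" and "in_PK K mu" and "coupling P mu Q" and "0 < N" and "0 \<le> L" and "0 < a"
  shows "(\<integral>p. fst p $ snd p \<partial>Q) - 2 * L * CARD('n) * (1 / a + a / (N * K))
      - 2 * (\<integral>v. max 0 (norm v - L) \<partial>P)
    \<le> (\<integral>x. (MAX s\<in>typeclass_seqs K N mu. sample_mean x s) \<partial>iid (N * K))"
proof -
  obtain k where k: "\<And>t. pmf mu t = real (k t) / real K"
    using in_PK_obtain_counts[OF assms(1,2)] by blast
  have "pmf mu t = real (N * k t) / real (N * K)" for t
    using \<open>0 < N\<close> by (simp add: k)
  from integral_Max_fixed_counts_ge[OF assms(3) _ this assms(5,6)] show ?thesis
    using assms(1,4) by (simp add: typeclass_seqs_eq_counts[OF assms(1) k])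
qed

lemma eventually_fernique_less_integral_Max_typeclass:
  assumes "0 < K" and "in_PK K mu" and "0 < e"
  shows "eventually (\<lambda>N. fernique P mu - e < (\<integral>x. (MAX s\<in>typeclass_seqs K N mu. sample_mean x s) \<partial>iid (N * K)))
    sequentially"
proof -
  have "{Q. coupling P mu Q} \<noteq> {}"
    using exists_coupling_integral_eq_Max_typeclass[OF assms(1,2), of 1] by auto
  then obtain Q where Q: "coupling P mu Q" and Q_near: "fernique P mu - e / 3 < (\<integral>p. fst p $ snd p \<partial>Q)"
    using fernique_approx[where e="e / 3"] \<open>0 < e\<close> by auto
  have "eventually (\<lambda>m. (\<integral>v. max 0 (norm v - real m) \<partial>P) < e / 6) sequentially"
    using order_tendstoD(2)[OF integral_excess_tendsto_zero[OF integrable_norm], of "e / 6"] \<open>0 < e\<close>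
    by simp
  then obtain m where tail: "(\<integral>v. max 0 (norm v - real m) \<partial>P) < e / 6"
    by (auto simp: eventually_sequentially)
  define L where "L = real m"
  define a where "a = 6 * L * CARD('n) / e + 1"
  have "0 \<le> L" and "0 < a"
    using \<open>0 < e\<close> by (simp_all add: L_def a_def add_nonneg_pos)
  have "6 * L * CARD('n) < e * a"
    using \<open>0 < e\<close> by (simp add: a_def field_simps)
  then have "2 * L * CARD('n) * (1 / a + 0) < e / 3"
    using \<open>0 < a\<close> by (simp add: field_simps)
  moreover have "(\<lambda>N. 2 * L * CARD('n) * (1 / a + a / real (N * K))) \<longlonglongrightarrow> 2 * L * CARD('n) * (1 / a + 0)"
    using assms(1) by (intro tendsto_intros LIMSEQ_linear[OF lim_const_over_n])
  ultimately have "eventually (\<lambda>N. 2 * L * CARD('n) * (1 / a + a / real (N * K)) < e / 3) sequentially"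
    by (rule order_tendstoD(2)[rotated])
  then show ?thesis
  proof (rule eventually_mono[OF eventually_conj[OF _ eventually_gt_at_top[of 0]]])
    fix N assume "2 * L * CARD('n) * (1 / a + a / real (N * K)) < e / 3 \<and> 0 < N"
    then show "fernique P mu - e < (\<integral>x. (MAX s\<in>typeclass_seqs K N mu. sample_mean x s) \<partial>iid (N * K))"
      using integral_Max_typeclass_ge[OF assms(1,2) Q _ \<open>0 \<le> L\<close> \<open>0 < a\<close>, of N] Q_near tail
      unfolding L_def by simp
  qed
qed

lemma integral_Max_typeclass_tendsto_fernique:
  assumes "0 < K" and "in_PK K mu"
  shows "(\<lambda>N. \<integral>x. (MAX s\<in>typeclass_seqs K N mu. sample_mean x s) \<partial>iid (N * K)) \<longlonglongrightarrow> fernique P mu"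
proof (rule LIMSEQ_of_eventually_le_and_approx)
  show "eventually (\<lambda>N. (\<integral>x. (MAX s\<in>typeclass_seqs K N mu. sample_mean x s) \<partial>iid (N * K)) \<le> fernique P mu)
    sequentially"
  proof (rule eventually_sequentiallyI[of 1])
    fix N :: nat assume "1 \<le> N"
    then obtain Q where Q: "coupling P mu Q"
      and "(\<integral>p. fst p $ snd p \<partial>Q) = (\<integral>x. (MAX s\<in>typeclass_seqs K N mu. sample_mean x s) \<partial>iid (N * K))"
      using exists_coupling_integral_eq_Max_typeclass[OF assms, of N] by auto
    then show "(\<integral>x. (MAX s\<in>typeclass_seqs K N mu. sample_mean x s) \<partial>iid (N * K)) \<le> fernique P mu"
      using coupling_integral_le_fernique[OF Q] by simp
  qed
qed (rule eventually_fernique_less_integral_Max_typeclass[OF assms])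

end

lemma (in integrable_vector_law) integral_Max_sample_mean_iid_sequence:
  assumes "prob_space M'" and "prob_space.indep_vars M' (\<lambda>_. borel) Y UNIV"
    and "\<And>i. Y i \<in> borel_measurable M'" and "\<And>i. distr M' borel (Y i) = P"
    and "0 < n" and "finite S" and "\<And>s. s \<in> S \<Longrightarrow> length s = n"
  shows "(\<integral>\<omega>. (MAX s\<in>S. sample_mean (\<lambda>i. Y i \<omega>) s) \<partial>M') = (\<integral>x. (MAX s\<in>S. sample_mean x s) \<partial>iid n)"
proof -
  interpret M': prob_space M' by fact
  have "sample_mean (\<lambda>i. Y i \<omega>) s = sample_mean (\<lambda>i\<in>{..<n}. Y i \<omega>) s" if "s \<in> S" for s \<omega>
    using assms(7)[OF that] by (intro sample_mean_cong[of s n]) simp_all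
  then have "(\<integral>\<omega>. (MAX s\<in>S. sample_mean (\<lambda>i. Y i \<omega>) s) \<partial>M')
      = (\<integral>\<omega>. (MAX s\<in>S. sample_mean (\<lambda>i\<in>{..<n}. Y i \<omega>) s) \<partial>M')"
    by (intro Bochner_Integration.integral_cong arg_cong[where f=Max] image_cong) simp_all
  also have "\<dots> = (\<integral>x. (MAX s\<in>S. sample_mean x s) \<partial>iid n)"
    unfolding iid_def
  proof (rule M'.integral_iid_eq_integral_PiM)
    show "{..<n} \<noteq> {}" using assms(5) by (simp add: lessThan_empty_iff)
    show "M'.indep_vars (\<lambda>_. borel) Y {..<n}"
      using M'.indep_vars_subset[OF assms(2)] by simp
    show "(\<lambda>x. MAX s\<in>S. sample_mean x s) \<in> borel_measurable (PiM {..<n} (\<lambda>_. borel))"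
      using measurable_sample_mean assms(6)
      unfolding measurable_cong_sets[OF sets_iid refl] by (intro borel_measurable_Max) simp_all
  qed (simp_all add: assms(3,4))
  finally show ?thesis .
qed

lemma integrable_vector_law_distr:
  fixes X :: "'w \<Rightarrow> real ^ 'n::finite"
  assumes "prob_space M" and X: "X \<in> borel_measurable M" and "\<And>t. integrable M (\<lambda>\<omega>. X \<omega> $ t)"
  shows "integrable_vector_law (distr M borel X)"
proof -
  have "prob_space (distr M borel X)"
    using assms(1) X by (rule prob_space.prob_space_distr)
  moreover have "integrable M (\<lambda>\<omega>. norm (X \<omega>))"
  proof (rule Bochner_Integration.integrable_bound)
    show "integrable M (\<lambda>\<omega>. \<Sum>t\<in>UNIV. \<bar>X \<omega> $ t\<bar>)"
      using assms(3) by (intro Bochner_Integration.integrable_sum integrable_abs)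
  qed (use X in \<open>simp_all add: norm_le_l1_cart\<close>)
  then have "integrable (distr M borel X) norm"
    using X by (simp add: integrable_distr_eq)
  ultimately show ?thesis
    unfolding integrable_vector_law_def integrable_vector_law_axioms_def by simp
qed

theorem proposition3:
  fixes M :: "'w measure" and X :: "'w \<Rightarrow> real ^ 'n::finite"
    and M' :: "'v measure" and Y :: "nat \<Rightarrow> 'v \<Rightarrow> real ^ 'n"
    and K :: nat and mu :: "'n pmf"
  assumes "prob_space M"
    and "X \<in> borel_measurable M"
    and "\<And>t. integrable M (\<lambda>\<omega>. X \<omega> $ t)"
    and "0 < K" and "in_PK K mu"
    and "prob_space M'"
    and "prob_space.indep_vars M' (\<lambda>_. borel) Y UNIV"
    and "\<And>i. Y i \<in> borel_measurable M'"
    and "\<And>i. distr M' borel (Y i) = distr M borel X"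
  shows "(\<lambda>N. \<integral>\<omega>. (MAX ts \<in> typeclass_seqs K N mu.
              (1 / real (length ts)) * (\<Sum>i<length ts. Y i \<omega> $ (ts ! i))) \<partial>M')
          \<longlonglongrightarrow> fernique (distr M borel X) mu"
proof -
  interpret integrable_vector_law "distr M borel X"
    using assms(1-3) by (rule integrable_vector_law_distr)
  have integrand: "(1 / real (length ts)) * (\<Sum>i<length ts. Y i \<omega> $ (ts ! i)) = sample_mean (\<lambda>i. Y i \<omega>) ts"
    for ts \<omega>
    by (simp add: sample_mean_def)
  have "(\<integral>x. (MAX s\<in>typeclass_seqs K N mu. sample_mean x s) \<partial>iid (N * K))
      = (\<integral>\<omega>. (MAX ts \<in> typeclass_seqs K N mu.
              (1 / real (length ts)) * (\<Sum>i<length ts. Y i \<omega> $ (ts ! i))) \<partial>M')" if "0 < N" for N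
  proof -
    have "0 < N * K" using that assms(4) by simp
    moreover have "length s = N * K" if "s \<in> typeclass_seqs K N mu" for s
      using that by (simp add: typeclass_seqs_def)
    ultimately show ?thesis
      unfolding integrand
      by (rule integral_Max_sample_mean_iid_sequence[OF assms(6-9) _ finite_typeclass_seqs, symmetric])
  qed
  then have "eventually (\<lambda>N. (\<integral>x. (MAX s\<in>typeclass_seqs K N mu. sample_mean x s) \<partial>iid (N * K))
      = (\<integral>\<omega>. (MAX ts \<in> typeclass_seqs K N mu.
              (1 / real (length ts)) * (\<Sum>i<length ts. Y i \<omega> $ (ts ! i))) \<partial>M')) sequentially"
    by (intro eventually_sequentiallyI[of 1]) simp
  with integral_Max_typeclass_tendsto_fernique[OF assms(4,5)] show ?thesis
    by (rule Lim_transform_eventually)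
qed

end
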